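(* The set consisting of the 1-in-3 gadget, the free terminal, and fanout gates parsimoniously simulates the NOR gate (via a planar simulation).
   Context: A gadget consists of a finite set of ports, equipped with a cyclic order, and a constraint, which is a set of subsets of the ports. A network of gadgets from $S$ is a finite undirected multigraph whose vertices are labeled by gadgets from $S$, each vertex's edge incidences being in bijection with the ports of its label. An assignment orients every edge; a vertex is satisfied if the set of its ports whose edges point into it belongs to its constraint. A simulation using gadgets from $S$ is a network of gadgets from $S$ that may additionally have dangling edges, each incident to only one vertex (equivalently, an extra outside-world vertex whose constraint contains every subset). It is planar if the graph including the outside world has a planar embedding respecting the port cyclic orders; the simulated gadget's ports are then the dangling edges in their order around the simulation. The simulated gadget's constraint consists of each set $D$ of dangling edges such that some assignment satisfying every non-outside-world vertex makes exactly the dangling edges in $D$ point into the simulation. A simulation is parsimonious if for each set in the simulated gadget's constraint there is exactly one such satisfying assignment realizing it; $S$ parsimoniously simulates $G$ if some parsimonious simulation using gadgets from $S$ has simulated gadget $G$. Gadgets: 1-in-3 gadget: ports $a,b,c$, constraint $\{\{a\},\{b\},\{c\}\}$. Free terminal: one port $a$, constraint $\{\emptyset,\{a\}\}$. $k$-way fanout gate: ports $a,c_1,\dots,c_k$, constraint $\{\{a\},\{c_1,\dots,c_k\}\}$. NOR gate: ports $a,b,c$, constraint $\{\emptyset,\{a,c\},\{b,c\},\{a,b,c\}\}$. *)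

theory Defs
  imports Main
begin

text \<open>A gadget is a pair (n, C): its ports are 0, ..., n-1 in the cyclic order
  0 -> 1 -> ... -> n-1 -> 0, and its constraint C is a set of subsets of the ports.\<close>

type_synonym gadget = "nat \<times> nat set set"

definition one_in_three :: gadget where
  "one_in_three = (3, {{0}, {1}, {2}})"

definition free_terminal :: gadget where
  "free_terminal = (1, {{}, {0}})"

definition fanout :: "nat \<Rightarrow> gadget" where
  "fanout k = (k + 1, {{0}, {1..k}})"              \<comment> \<open>ports a=0, c_j=j\<close>

definition nor_gate :: gadget where
  "nor_gate = (3, {{}, {0, 2}, {1, 2}, {0, 1, 2}})" \<comment> \<open>ports a=0, b=1, c=2\<close>

definition orbit :: "('a \<Rightarrow> 'a) \<Rightarrow> 'a \<Rightarrow> 'a set" where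
  "orbit f x = {(f ^^ k) x | k. True}"

definition map_component :: "'a set \<Rightarrow> ('a \<Rightarrow> 'a) \<Rightarrow> ('a \<Rightarrow> 'a) \<Rightarrow> 'a \<Rightarrow> 'a set" where
  "map_component D \<sigma> \<alpha> x =
     {y. (x, y) \<in> ({(u, \<sigma> u) | u. u \<in> D} \<union> {(u, \<alpha> u) | u. u \<in> D})\<^sup>*}"

text \<open>Darts D, rotation \<sigma> (vertices = \<sigma>-orbits), edge involution \<alpha>
  (edges = \<alpha>-orbits), faces = orbits of \<sigma> \<circ> \<alpha>. The map is planar (genus 0)
  iff Euler's formula V - E + F = 2 holds on every connected component.\<close>

definition planar_map :: "'a set \<Rightarrow> ('a \<Rightarrow> 'a) \<Rightarrow> ('a \<Rightarrow> 'a) \<Rightarrow> bool" where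
  "planar_map D \<sigma> \<alpha> \<longleftrightarrow>
     (\<forall>x\<in>D. let K = map_component D \<sigma> \<alpha> x in
        int (card (orbit \<sigma> ` K)) - int (card (orbit \<alpha> ` K))
          + int (card (orbit (\<sigma> \<circ> \<alpha>) ` K)) = 2)"

text \<open>A simulation: finite vertex set V (vertices are naturals), labels lab,
  half-edges (v,i) with v in V and i a port of lab v, and an involution m on
  half-edges: m h = h means h is a dangling edge, otherwise {h, m h} is an edge
  (possibly a self-loop joining two ports of the same vertex).\<close>

definition halfedges :: "nat set \<Rightarrow> (nat \<Rightarrow> gadget) \<Rightarrow> (nat \<times> nat) set" where
  "halfedges V lab = {(v, i). v \<in> V \<and> i < fst (lab v)}"

definition wf_sim :: "nat set \<Rightarrow> (nat \<Rightarrow> gadget) \<Rightarrow> (nat \<times> nat \<Rightarrow> nat \<times> nat) \<Rightarrow> bool" where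
  "wf_sim V lab m \<longleftrightarrow> finite V \<and>
     (\<forall>h\<in>halfedges V lab. m h \<in> halfedges V lab \<and> m (m h) = h)"

definition dangling :: "nat set \<Rightarrow> (nat \<Rightarrow> gadget) \<Rightarrow> (nat \<times> nat \<Rightarrow> nat \<times> nat) \<Rightarrow> (nat \<times> nat) set" where
  "dangling V lab m = {h \<in> halfedges V lab. m h = h}"

text \<open>An assignment a: a h = True means the edge at half-edge h points into
  the vertex of h (for a dangling edge: into the simulation). Every internal edge
  points into exactly one of its two ends.\<close>

definition good_assignment ::
  "nat set \<Rightarrow> (nat \<Rightarrow> gadget) \<Rightarrow> (nat \<times> nat \<Rightarrow> nat \<times> nat) \<Rightarrow> (nat \<times> nat \<Rightarrow> bool) \<Rightarrow> bool" where
  "good_assignment V lab m a \<longleftrightarrow>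
     (\<forall>h\<in>halfedges V lab. m h \<noteq> h \<longrightarrow> a (m h) \<noteq> a h) \<and>
     (\<forall>v\<in>V. {i. i < fst (lab v) \<and> a (v, i)} \<in> snd (lab v))"

definition realizes ::
  "nat set \<Rightarrow> (nat \<Rightarrow> gadget) \<Rightarrow> (nat \<times> nat \<Rightarrow> nat \<times> nat) \<Rightarrow> (nat \<times> nat \<Rightarrow> bool)
     \<Rightarrow> (nat \<times> nat) set \<Rightarrow> bool" where
  "realizes V lab m a D \<longleftrightarrow> D = {h \<in> dangling V lab m. a h}"

definition sim_constraint ::
  "nat set \<Rightarrow> (nat \<Rightarrow> gadget) \<Rightarrow> (nat \<times> nat \<Rightarrow> nat \<times> nat) \<Rightarrow> (nat \<times> nat) set set" where
  "sim_constraint V lab m =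
     {D. \<exists>a. good_assignment V lab m a \<and> realizes V lab m a D}"

definition parsimonious ::
  "nat set \<Rightarrow> (nat \<Rightarrow> gadget) \<Rightarrow> (nat \<times> nat \<Rightarrow> nat \<times> nat) \<Rightarrow> bool" where
  "parsimonious V lab m \<longleftrightarrow>
     (\<forall>D\<in>sim_constraint V lab m. \<forall>a b.
        good_assignment V lab m a \<and> realizes V lab m a D \<and>
        good_assignment V lab m b \<and> realizes V lab m b D \<longrightarrow>
        (\<forall>h\<in>halfedges V lab. a h = b h))"

text \<open>Planar embedding of the simulation together with the outside-world vertex.
  Darts: Inl h for each half-edge h of a gadget vertex, Inr h for the end of the
  dangling edge h at the outside world. Rotation at a gadget vertex follows its
  port cyclic order; rho is the cyclic order of the dangling edges at the
  outside-world vertex (a single cycle on the dangling edges).\<close>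

definition sim_darts :: "nat set \<Rightarrow> (nat \<Rightarrow> gadget) \<Rightarrow> (nat \<times> nat \<Rightarrow> nat \<times> nat)
     \<Rightarrow> ((nat \<times> nat) + (nat \<times> nat)) set" where
  "sim_darts V lab m = Inl ` halfedges V lab \<union> Inr ` dangling V lab m"

definition sim_rot :: "(nat \<Rightarrow> gadget) \<Rightarrow> (nat \<times> nat \<Rightarrow> nat \<times> nat)
     \<Rightarrow> (nat \<times> nat) + (nat \<times> nat) \<Rightarrow> (nat \<times> nat) + (nat \<times> nat)" where
  "sim_rot lab \<rho> d = (case d of
      Inl (v, i) \<Rightarrow> Inl (v, Suc i mod fst (lab v))
    | Inr h \<Rightarrow> Inr (\<rho> h))"

definition sim_edge :: "(nat \<times> nat \<Rightarrow> nat \<times> nat)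
     \<Rightarrow> (nat \<times> nat) + (nat \<times> nat) \<Rightarrow> (nat \<times> nat) + (nat \<times> nat)" where
  "sim_edge m d = (case d of
      Inl h \<Rightarrow> (if m h = h then Inr h else Inl (m h))
    | Inr h \<Rightarrow> Inl h)"

definition outside_rotation ::
  "nat set \<Rightarrow> (nat \<Rightarrow> gadget) \<Rightarrow> (nat \<times> nat \<Rightarrow> nat \<times> nat) \<Rightarrow> (nat \<times> nat \<Rightarrow> nat \<times> nat) \<Rightarrow> bool" where
  "outside_rotation V lab m \<rho> \<longleftrightarrow>
     bij_betw \<rho> (dangling V lab m) (dangling V lab m) \<and>
     (\<forall>h\<in>dangling V lab m. \<forall>h'\<in>dangling V lab m. \<exists>k. (\<rho> ^^ k) h = h')"

definition planar_sim ::
  "nat set \<Rightarrow> (nat \<Rightarrow> gadget) \<Rightarrow> (nat \<times> nat \<Rightarrow> nat \<times> nat) \<Rightarrow> (nat \<times> nat \<Rightarrow> nat \<times> nat) \<Rightarrow> bool" where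
  "planar_sim V lab m \<rho> \<longleftrightarrow>
     outside_rotation V lab m \<rho> \<and>
     planar_map (sim_darts V lab m) (sim_rot lab \<rho>) (sim_edge m)"

text \<open>S parsimoniously simulates G (planarly): there is a planar parsimonious
  simulation using gadgets from S and a bijection p from its dangling edges onto
  the ports of G that respects the cyclic order of the dangling edges around the
  simulation (which is the reverse of the rotation rho at the outside-world vertex)
  and carries the simulated constraint onto the constraint of G.\<close>

definition planar_parsimoniously_simulates :: "gadget set \<Rightarrow> gadget \<Rightarrow> bool" where
  "planar_parsimoniously_simulates S G \<longleftrightarrow>
     (\<exists>V lab m \<rho> p.
        wf_sim V lab m \<and> (\<forall>v\<in>V. lab v \<in> S) \<and>
        planar_sim V lab m \<rho> \<and>
        parsimonious V lab m \<and>
        bij_betw p (dangling V lab m) {0..<fst G} \<and>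
        (\<forall>h\<in>dangling V lab m. p h = Suc (p (\<rho> h)) mod fst G) \<and>
        (\<lambda>D. p ` D) ` sim_constraint V lab m = snd G)"

end

theory Submission
  imports Defs
begin

text \<open>The inputs \<open>a\<close> and \<open>b\<close> enter two 1-in-3 gadgets, one port of each is
  wired to a 3-way fanout whose middle port carries the output \<open>c\<close>, so both gadgets see \<open>\<not> c\<close>
  there and \<open>c = False\<close> forces \<open>a = b = False\<close>. The third ports of the two input gadgets are
  copied through 2-way fanouts into a third 1-in-3 gadget, which forbids both being set, i.e.
  forbids \<open>c = True\<close> with \<open>a = b = False\<close>. Spare ports end in free terminals. The orientation of
  every edge is then a function of \<open>a\<close> and \<open>b\<close>, which gives parsimony. Planarity is certified
  by listing the vertices, edges and faces of the rotation system (11 - 13 + 4 = 2) together with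
  a closed walk through all darts for connectivity.\<close>

section \<open>Planarity certificates for combinatorial maps\<close>

definition cycle_list :: "('a \<Rightarrow> 'a) \<Rightarrow> 'a list \<Rightarrow> bool" where
  "cycle_list f xs \<longleftrightarrow> xs \<noteq> [] \<and> map f xs = rotate1 xs"

lemma cycle_list_funpow:
  assumes "cycle_list f xs"
  shows "map (f ^^ k) xs = rotate k xs"
proof (induction k)
  case (Suc k)
  have "map (f ^^ Suc k) xs = map f (rotate k xs)"
    by (simp flip: Suc map_map)
  also have "\<dots> = rotate (Suc k) xs"
    using assms by (simp add: cycle_list_def rotate1_rotate_swap flip: rotate_map)
  finally show ?case .
qed simp

lemma orbit_cycle_list:
  assumes cyc: "cycle_list f xs" and x: "x \<in> set xs"
  shows "orbit f x = set xs"
proof -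
  obtain i where i: "i < length xs" "x = xs ! i" using x by (auto simp: in_set_conv_nth)
  have n: "0 < length xs" using i(1) by linarith
  have iter: "(f ^^ k) x = xs ! ((k + i) mod length xs)" for k
    using arg_cong[OF cycle_list_funpow[OF cyc, of k], of "\<lambda>ys. ys ! i"] i
    by (simp add: nth_rotate)
  show ?thesis
  proof
    show "orbit f x \<subseteq> set xs"
      unfolding orbit_def iter using n by auto
    show "set xs \<subseteq> orbit f x"
    proof
      fix y assume "y \<in> set xs"
      then obtain j where j: "j < length xs" "y = xs ! j" by (auto simp: in_set_conv_nth)
      have "(j + length xs - i + i) mod length xs = j" using i j by simp
      then have "(f ^^ (j + length xs - i)) x = y" by (simp add: iter j)
      then show "y \<in> orbit f x" unfolding orbit_def by blast
    qed
  qed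
qed

lemma card_orbits_cycle_lists:
  assumes cyc: "\<forall>c\<in>set cs. cycle_list f c" and dist: "distinct (concat cs)"
  shows "card (orbit f ` set (concat cs)) = length cs"
proof -
  have ne: "[] \<notin> set cs" using cyc by (auto simp: cycle_list_def)
  have "orbit f ` set c = {set c}" if "c \<in> set cs" for c
  proof -
    have "orbit f ` set c = (\<lambda>_. set c) ` set c"
      using cyc that by (intro image_cong) (auto simp: orbit_cycle_list)
    moreover have "c \<noteq> []" using that ne by blast
    ultimately show ?thesis by (simp add: image_constant_conv)
  qed
  then have "orbit f ` set (concat cs) = set ` set cs"
    by (auto simp: image_UN)
  moreover have "distinct cs"
    and disj: "\<forall>ys zs. ys \<in> set cs \<and> zs \<in> set cs \<and> ys \<noteq> zs \<longrightarrow> set ys \<inter> set zs = {}"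
    using dist ne by (auto simp: distinct_concat_iff removeAll_id)
  moreover have "inj_on set (set cs)"
  proof (rule inj_onI)
    fix x y assume "x \<in> set cs" "y \<in> set cs" "set x = set y"
    with disj ne show "x = y" by (metis Int_absorb set_empty)
  qed
  ultimately show ?thesis by (simp add: card_image distinct_card)
qed

lemma map_component_closed_walk:
  assumes closed: "\<forall>u\<in>D. \<sigma> u \<in> D \<and> \<alpha> u \<in> D"
    and walk: "\<forall>(u, v)\<in>set (zip ws (rotate1 ws)). v = \<sigma> u \<or> v = \<alpha> u"
    and ws: "set ws = D" and x: "x \<in> D"
  shows "map_component D \<sigma> \<alpha> x = D"
proof -
  define R where "R = {(u, \<sigma> u) | u. u \<in> D} \<union> {(u, \<alpha> u) | u. u \<in> D}"
  have comp: "map_component D \<sigma> \<alpha> x = {y. (x, y) \<in> R\<^sup>*}"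
    by (simp add: map_component_def R_def)
  let ?n = "length ws"
  have step: "(ws ! j, ws ! (Suc j mod ?n)) \<in> R" if "j < ?n" for j
  proof -
    have "(ws ! j, rotate1 ws ! j) \<in> set (zip ws (rotate1 ws))"
      using that by (auto simp: set_zip)
    then show ?thesis
      using walk that ws by (auto simp: R_def nth_rotate1)
  qed
  have n: "0 < ?n" using x ws by (auto simp: length_pos_if_in_set)
  have forward: "(ws ! i, ws ! ((i + k) mod ?n)) \<in> R\<^sup>*" if "i < ?n" for i k
  proof (induction k)
    case (Suc k)
    have "(ws ! ((i + k) mod ?n), ws ! (Suc ((i + k) mod ?n) mod ?n)) \<in> R"
      using step n by simp
    with Suc show ?case by (simp add: mod_Suc_eq)
  qed (use that in simp)
  show ?thesis
  proof
    have "y \<in> D" if "(x, y) \<in> R\<^sup>*" for y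
      using that x closed by (induction rule: rtrancl_induct) (auto simp: R_def)
    then show "map_component D \<sigma> \<alpha> x \<subseteq> D" by (auto simp: comp)
  next
    show "D \<subseteq> map_component D \<sigma> \<alpha> x"
    proof
      fix y assume "y \<in> D"
      obtain i where i: "i < ?n" "x = ws ! i" using x ws by (auto simp: in_set_conv_nth)
      obtain j where j: "j < ?n" "y = ws ! j" using \<open>y \<in> D\<close> ws by (auto simp: in_set_conv_nth)
      have "(i + (j + ?n - i)) mod ?n = j" using i j by simp
      then have "(x, y) \<in> R\<^sup>*"
        using forward[OF i(1), of "j + ?n - i"] by (simp add: i j)
      then show "y \<in> map_component D \<sigma> \<alpha> x" by (simp add: comp)
    qed
  qed
qed

lemma cycle_lists_closed:
  assumes "\<forall>c\<in>set cs. cycle_list f c" and "x \<in> set (concat cs)"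
  shows "f x \<in> set (concat cs)"
proof -
  obtain c where c: "c \<in> set cs" "x \<in> set c" using assms(2) by auto
  then have "f x \<in> set (map f c)" by simp
  also have "set (map f c) = set c" using assms(1) c(1) by (simp add: cycle_list_def)
  finally show ?thesis using c(1) by auto
qed

lemma planar_mapI:
  assumes vs: "\<forall>c\<in>set vs. cycle_list \<sigma> c" "distinct (concat vs)" "set (concat vs) = D"
    and es: "\<forall>c\<in>set es. cycle_list \<alpha> c" "distinct (concat es)" "set (concat es) = D"
    and fs: "\<forall>c\<in>set fs. cycle_list (\<sigma> \<circ> \<alpha>) c" "distinct (concat fs)" "set (concat fs) = D"
    and walk: "\<forall>(u, v)\<in>set (zip ws (rotate1 ws)). v = \<sigma> u \<or> v = \<alpha> u" "set ws = D"
    and euler: "int (length vs) - int (length es) + int (length fs) = 2"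
  shows "planar_map D \<sigma> \<alpha>"
proof -
  have "\<forall>u\<in>D. \<sigma> u \<in> D \<and> \<alpha> u \<in> D"
    using cycle_lists_closed[OF vs(1)] cycle_lists_closed[OF es(1)] unfolding vs(3) es(3) by blast
  then have "map_component D \<sigma> \<alpha> x = D" if "x \<in> D" for x
    using map_component_closed_walk[OF _ walk that] by simp
  then show ?thesis
    using card_orbits_cycle_lists[OF vs(1,2)] card_orbits_cycle_lists[OF es(1,2)]
      card_orbits_cycle_lists[OF fs(1,2)] vs(3) es(3) fs(3) euler
    by (simp add: planar_map_def)
qed

lemma halfedges_upt:
  "halfedges {0..<n} lab = set (concat (map (\<lambda>v. map (Pair v) [0..<fst (lab v)]) [0..<n]))"
  by (auto simp: halfedges_def)

lemma dangling_subset_halfedges: "dangling V lab m \<subseteq> halfedges V lab"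
  by (auto simp: dangling_def)

definition accepts :: "gadget \<Rightarrow> (nat \<Rightarrow> bool) \<Rightarrow> bool" where
  "accepts g P \<longleftrightarrow> {i. i < fst g \<and> P i} \<in> snd g"

lemma accepts_one_in_three:
  "accepts one_in_three P \<longleftrightarrow>
     (P 0 \<and> \<not> P 1 \<and> \<not> P 2) \<or> (\<not> P 0 \<and> P 1 \<and> \<not> P 2) \<or> (\<not> P 0 \<and> \<not> P 1 \<and> P 2)"
proof -
  have lt3: "i = 0 \<or> i = 1 \<or> i = 2" if "i < 3" for i :: nat
    using that by arith
  have S: "{i. i < 3 \<and> P i} = set (filter P [0, 1, 2])"
    by (auto dest: lt3)
  show ?thesis
    unfolding accepts_def one_in_three_def fst_conv snd_conv S
    by (cases "P 0"; cases "P 1"; cases "P 2") simp_all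
qed

lemma accepts_fanout: "accepts (fanout k) P \<longleftrightarrow> (\<forall>j\<in>{1..k}. P j \<longleftrightarrow> \<not> P 0)"
proof -
  define C where "C = {j \<in> {1..k}. P j}"
  have "0 \<notin> C" "0 \<notin> {1..k}" by (auto simp: C_def)
  then have zero: "insert 0 C \<noteq> {1..k}" "C \<noteq> {0}" by blast+
  have S: "{i. i < k + 1 \<and> P i} = (if P 0 then insert 0 C else C)"
    by (auto simp: C_def Suc_le_eq intro: gr0I)
  have "C = {} \<longleftrightarrow> (\<forall>j\<in>{1..k}. \<not> P j)" "C = {1..k} \<longleftrightarrow> (\<forall>j\<in>{1..k}. P j)"
    by (auto simp: C_def Suc_le_eq intro: gr0I)
  then show ?thesis
    unfolding accepts_def fanout_def fst_conv snd_conv S using zero by auto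
qed

lemma accepts_free_terminal: "accepts free_terminal P"
proof -
  have "{i. i < 1 \<and> P i} = (if P 0 then {0} else {})" by auto
  then show ?thesis by (simp add: accepts_def free_terminal_def)
qed

lemma good_assignment_iff:
  "good_assignment V lab m a \<longleftrightarrow>
     (\<forall>h\<in>halfedges V lab. m h \<noteq> h \<longrightarrow> a (m h) \<noteq> a h) \<and> (\<forall>v\<in>V. accepts (lab v) (\<lambda>i. a (v, i)))"
  by (simp add: good_assignment_def accepts_def)

lemma realizes_filter:
  "dangling V lab m = set hs \<Longrightarrow> realizes V lab m a D \<longleftrightarrow> D = set (filter a hs)"
  by (simp add: realizes_def)

lemma parsimoniousI:
  assumes "\<And>a b. good_assignment V lab m a \<Longrightarrow> good_assignment V lab m b \<Longrightarrow>
      \<forall>h\<in>dangling V lab m. a h = b h \<Longrightarrow> \<forall>h\<in>halfedges V lab. a h = b h"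
  shows "parsimonious V lab m"
  unfolding parsimonious_def
proof (intro ballI allI impI)
  fix D a b h
  assume "good_assignment V lab m a \<and> realizes V lab m a D \<and> good_assignment V lab m b \<and> realizes V lab m b D"
  then have "good_assignment V lab m a" "good_assignment V lab m b"
    and "D = {h \<in> dangling V lab m. a h}" "D = {h \<in> dangling V lab m. b h}"
    unfolding realizes_def by blast+
  moreover from this(3,4) have "\<forall>h\<in>dangling V lab m. a h = b h" by blast
  moreover assume "h \<in> halfedges V lab"
  ultimately show "a h = b h" using assms by blast
qed

lemma outside_rotationI:
  assumes "dangling V lab m = set hs" and "distinct hs" and "cycle_list \<rho> hs"
  shows "outside_rotation V lab m \<rho>"
proof -
  have "distinct (map \<rho> hs)" "set (map \<rho> hs) = set hs"
    using assms(2,3) by (simp_all add: cycle_list_def)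
  then have "bij_betw \<rho> (set hs) (set hs)"
    by (simp add: bij_betw_def distinct_map)
  moreover have "\<exists>k. (\<rho> ^^ k) h = h'" if "h \<in> set hs" "h' \<in> set hs" for h h'
  proof -
    have "h' \<in> orbit \<rho> h" using orbit_cycle_list[OF assms(3) that(1)] that(2) by simp
    then show ?thesis unfolding orbit_def by auto
  qed
  ultimately show ?thesis
    by (simp add: outside_rotation_def assms(1))
qed

section \<open>The NOR network\<close>

definition nor_label :: "nat \<Rightarrow> gadget" where
  "nor_label v = [one_in_three, one_in_three, fanout 3, fanout 2, fanout 2, one_in_three,
     free_terminal, free_terminal, free_terminal, free_terminal] ! v"

definition nor_wires :: "((nat \<times> nat) \<times> (nat \<times> nat)) list" where
  "nor_wires = [((0,1), (2,1)), ((0,2), (3,1)), ((1,1), (4,1)), ((1,2), (2,3)), ((2,0), (6,0)),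
     ((3,0), (7,0)), ((3,2), (5,0)), ((4,0), (8,0)), ((4,2), (5,1)), ((5,2), (9,0))]"

definition nor_match :: "nat \<times> nat \<Rightarrow> nat \<times> nat" where
  "nor_match h = (case map_of (nor_wires @ map prod.swap nor_wires) h of Some h' \<Rightarrow> h' | None \<Rightarrow> h)"

definition nor_halfedge_list :: "(nat \<times> nat) list" where
  "nor_halfedge_list = [(0,0), (0,1), (0,2), (1,0), (1,1), (1,2), (2,0), (2,1), (2,2), (2,3),
     (3,0), (3,1), (3,2), (4,0), (4,1), (4,2), (5,0), (5,1), (5,2), (6,0), (7,0), (8,0), (9,0)]"

definition nor_dangling_list :: "(nat \<times> nat) list" where
  "nor_dangling_list = [(0,0), (1,0), (2,2)]"

lemma nor_halfedges: "halfedges {0..<10} nor_label = set nor_halfedge_list"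
  unfolding halfedges_upt nor_label_def one_in_three_def fanout_def free_terminal_def
    nor_halfedge_list_def
  by code_simp

lemma nor_dangling: "dangling {0..<10} nor_label nor_match = set nor_dangling_list"
  unfolding dangling_def nor_halfedges nor_match_def nor_wires_def nor_halfedge_list_def
    nor_dangling_list_def
  by code_simp

lemma nor_wf_sim: "wf_sim {0..<10} nor_label nor_match"
  unfolding wf_sim_def nor_halfedges nor_halfedge_list_def nor_match_def nor_wires_def
  by (simp only: finite_atLeastLessThan simp_thms) code_simp

lemma nor_label_mem:
  "\<forall>v\<in>{0..<10}. nor_label v \<in> {one_in_three, free_terminal} \<union> {fanout k | k. k \<ge> 1}"
  unfolding atLeastLessThan_upt by (auto simp: upt_rec nor_label_def)

definition nor_flow :: "bool \<Rightarrow> bool \<Rightarrow> nat \<times> nat \<Rightarrow> bool" where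
  "nor_flow x y = (\<lambda>(v, i). let c = x \<or> y; u = \<not> x \<and> y; w = x \<and> \<not> y in
     [[x, \<not> c, u], [y, w, \<not> c], [\<not> c, c, c, c], [u, \<not> u, \<not> u], [w, \<not> w, \<not> w], [u, w, x = y],
      [c], [\<not> u], [\<not> w], [x \<noteq> y]] ! v ! i)"

lemma nor_good_assignment_iff:
  "good_assignment {0..<10} nor_label nor_match a \<longleftrightarrow>
     (\<forall>h\<in>halfedges {0..<10} nor_label. a h = nor_flow (a (0,0)) (a (1,0)) h)"
  unfolding good_assignment_iff nor_halfedges
  unfolding atLeastLessThan_upt
  by (simp add: nor_halfedge_list_def upt_rec eval_nat_numeral atLeastAtMostSuc_conv nor_match_def
      nor_wires_def nor_label_def accepts_one_in_three accepts_fanout accepts_free_terminal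
      nor_flow_def Let_def)
    argo

lemma nor_parsimonious: "parsimonious {0..<10} nor_label nor_match"
proof (rule parsimoniousI)
  fix a b
  assume "good_assignment {0..<10} nor_label nor_match a" "good_assignment {0..<10} nor_label nor_match b"
    and "\<forall>h\<in>dangling {0..<10} nor_label nor_match. a h = b h"
  then show "\<forall>h\<in>halfedges {0..<10} nor_label. a h = b h"
    by (simp add: nor_good_assignment_iff nor_dangling nor_dangling_list_def)
qed

lemma nor_sim_constraint:
  "sim_constraint {0..<10} nor_label nor_match = {{}, {(0,0), (2,2)}, {(1,0), (2,2)}, {(0,0), (1,0), (2,2)}}"
proof -
  let ?out = "\<lambda>x y. set (filter (nor_flow x y) nor_dangling_list)"
  have "sim_constraint {0..<10} nor_label nor_match = {?out x y | x y. True}"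
  proof (intro set_eqI iffI)
    fix D assume "D \<in> sim_constraint {0..<10} nor_label nor_match"
    then obtain a where good: "good_assignment {0..<10} nor_label nor_match a"
        and D: "D = set (filter a nor_dangling_list)"
      unfolding sim_constraint_def realizes_filter[OF nor_dangling] by blast
    have "set nor_dangling_list \<subseteq> halfedges {0..<10} nor_label"
      using dangling_subset_halfedges nor_dangling by blast
    then have "filter a nor_dangling_list = filter (nor_flow (a (0,0)) (a (1,0))) nor_dangling_list"
      using good unfolding nor_good_assignment_iff by (intro filter_cong) blast+
    then have "D = ?out (a (0,0)) (a (1,0))" using D by simp
    then show "D \<in> {?out x y | x y. True}" by blast
  next
    fix D assume "D \<in> {?out x y | x y. True}"
    then obtain x y where "D = ?out x y" by blast
    moreover have "good_assignment {0..<10} nor_label nor_match (nor_flow x y)"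
      by (simp add: nor_good_assignment_iff nor_flow_def)
    ultimately show "D \<in> sim_constraint {0..<10} nor_label nor_match"
      unfolding sim_constraint_def realizes_filter[OF nor_dangling] by blast
  qed
  also have "\<dots> = case_prod ?out ` (UNIV \<times> UNIV)"
    by auto
  also have "\<dots> = {{}, {(0,0), (2,2)}, {(1,0), (2,2)}, {(0,0), (1,0), (2,2)}}"
    by (simp add: UNIV_bool nor_flow_def nor_dangling_list_def insert_commute)
  finally show ?thesis .
qed

definition nor_rotation :: "nat \<times> nat \<Rightarrow> nat \<times> nat" where
  "nor_rotation h =
     (if h = (0,0) then (1,0) else if h = (1,0) then (2,2) else if h = (2,2) then (0,0) else h)"

definition nor_vertex_cycles :: "((nat \<times> nat) + (nat \<times> nat)) list list" where
  "nor_vertex_cycles = map Inr nor_dangling_list #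
     map (\<lambda>v. map (\<lambda>i. Inl (v, i)) [0..<fst (nor_label v)]) [0..<10]"

definition nor_edge_cycles :: "((nat \<times> nat) + (nat \<times> nat)) list list" where
  "nor_edge_cycles = map (\<lambda>h. [Inl h, Inr h]) nor_dangling_list @
     map (\<lambda>(h, h'). [Inl h, Inl h']) nor_wires"

definition nor_face_cycles :: "((nat \<times> nat) + (nat \<times> nat)) list list" where
  "nor_face_cycles =
    [[Inl (0,0), Inr (1,0), Inl (1,1), Inl (4,2), Inl (5,2), Inl (9,0), Inl (5,0), Inl (3,0),
      Inl (7,0), Inl (3,1)],
     [Inl (0,1), Inl (2,2), Inr (0,0)],
     [Inl (0,2), Inl (3,2), Inl (5,1), Inl (4,0), Inl (8,0), Inl (4,1), Inl (1,2), Inl (2,0),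
      Inl (6,0), Inl (2,1)],
     [Inl (1,0), Inr (2,2), Inl (2,3)]]"

definition nor_walk :: "((nat \<times> nat) + (nat \<times> nat)) list" where
  "nor_walk = [Inl (0,1), Inl (2,1), Inl (2,2), Inl (2,3), Inl (1,2), Inl (1,0), Inl (1,1), Inl (4,1),
     Inl (4,2), Inl (4,0), Inl (8,0), Inl (4,0), Inl (4,1), Inl (4,2), Inl (5,1), Inl (5,2), Inl (9,0),
     Inl (5,2), Inl (5,0), Inl (3,2), Inl (3,0), Inl (7,0), Inl (3,0), Inl (3,1), Inl (0,2), Inl (0,0),
     Inr (0,0), Inr (1,0), Inr (2,2), Inl (2,2), Inl (2,3), Inl (2,0), Inl (6,0), Inl (2,0), Inl (2,1)]"

lemma nor_darts: "sim_darts {0..<10} nor_label nor_match = set (concat nor_vertex_cycles)"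
  unfolding sim_darts_def nor_halfedges nor_dangling nor_vertex_cycles_def nor_halfedge_list_def
    nor_label_def one_in_three_def fanout_def free_terminal_def
  by code_simp

lemma nor_planar_map:
  "planar_map (sim_darts {0..<10} nor_label nor_match) (sim_rot nor_label nor_rotation) (sim_edge nor_match)"
  unfolding nor_darts
  apply (rule planar_mapI[where vs = nor_vertex_cycles and es = nor_edge_cycles
        and fs = nor_face_cycles and ws = nor_walk])
  unfolding nor_vertex_cycles_def nor_edge_cycles_def nor_face_cycles_def nor_walk_def
    nor_dangling_list_def sim_rot_def sim_edge_def nor_label_def one_in_three_def fanout_def
    free_terminal_def nor_rotation_def nor_match_def nor_wires_def cycle_list_def
  by code_simp+

lemma nor_planar_sim: "planar_sim {0..<10} nor_label nor_match nor_rotation"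
  unfolding planar_sim_def
proof
  show "outside_rotation {0..<10} nor_label nor_match nor_rotation"
    by (rule outside_rotationI[OF nor_dangling])
      (simp_all add: nor_dangling_list_def cycle_list_def nor_rotation_def)
qed (rule nor_planar_map)

text \<open>The simulated ports are numbered against \<open>nor_rotation\<close>: the input of gadget 1 becomes
  port \<open>a\<close> and that of gadget 0 port \<open>b\<close>, which is harmless as NOR is symmetric.\<close>

definition nor_port :: "nat \<times> nat \<Rightarrow> nat" where
  "nor_port h = (if h = (1,0) then 0 else if h = (0,0) then 1 else 2)"

lemma nor_port_bij: "bij_betw nor_port (dangling {0..<10} nor_label nor_match) {0..<fst nor_gate}"
proof -
  have "{0..<fst nor_gate} = {0, 1, 2}" by (auto simp: nor_gate_def)
  then show ?thesis
    unfolding nor_dangling by (auto simp: bij_betw_def nor_port_def nor_dangling_list_def)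
qed

lemma nor_port_rotation:
  "\<forall>h\<in>dangling {0..<10} nor_label nor_match. nor_port h = Suc (nor_port (nor_rotation h)) mod fst nor_gate"
  by (simp add: nor_dangling nor_dangling_list_def nor_port_def nor_rotation_def nor_gate_def)

lemma nor_port_constraint: "(\<lambda>D. nor_port ` D) ` sim_constraint {0..<10} nor_label nor_match = snd nor_gate"
  unfolding nor_sim_constraint by (simp add: nor_port_def nor_gate_def insert_commute)

theorem mainTheorem13:
  shows "planar_parsimoniously_simulates
           ({one_in_three, free_terminal} \<union> {fanout k | k. k \<ge> 1}) nor_gate"
  unfolding planar_parsimoniously_simulates_def
  using nor_wf_sim nor_label_mem nor_planar_sim nor_parsimonious nor_port_bij nor_port_rotation
    nor_port_constraint
  by blast

end
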